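(* Let $p,r$ be positive integers and $s=p+2r$. Let $\Phi^*:V^*_{ps}(\mathbb{R})\to\mathbb{C}^{r\times p}$ be the map $\Phi^*(X)=WZ^{-1}$, where for $X=(X_0;X_1;X_2;X_3)$ (blocks of $p,p,r,r$ rows) $Z=X_0+iX_1$ and $W=X_2+iX_3$. Then the complex valued components of $\Phi^*$ form an orthogonal harmonic family of $\mathbf{GL}_p(\mathbb{R})$-invariant functions on $V^*_{ps}(\mathbb{R})$, equipped with the Euclidean metric.
   Context: $U^*_{ps}(\mathbb{R})=\{X\in\mathbb{R}^{(p+s)\times p}: X^tX \text{ invertible}\}$ and $V^*_{ps}(\mathbb{R})=\{X\in U^*_{ps}(\mathbb{R}): \det Z\neq0\}$. $\mathbf{GL}_p(\mathbb{R})$ acts by right multiplication. The Euclidean metric is $\langle X,Y\rangle=\mathrm{trace}(X^tY)$. For a Riemannian manifold $(M,g)$ and complex functions $\phi,\psi$, $\tau(\phi)$ is the Laplace–Beltrami operator (extended complex-linearly) and $\kappa(\phi,\psi)=g(\mathrm{grad}\,\phi,\mathrm{grad}\,\psi)$ with $g$ extended complex-bilinearly. A set $\Omega$ of complex functions is an orthogonal harmonic family if $\tau(\phi)=0$ and $\kappa(\phi,\psi)=0$ for all $\phi,\psi\in\Omega$. *)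

theory Defs
  imports "HOL-Analysis.Analysis"
begin

definition dir_deriv :: "('a::euclidean_space \<Rightarrow> complex) \<Rightarrow> 'a \<Rightarrow> 'a \<Rightarrow> complex" where
  "dir_deriv f x v = vector_derivative (\<lambda>t::real. f (x + t *\<^sub>R v)) (at 0)"

text \<open>Laplace-Beltrami operator for the Euclidean metric (extended complex-linearly).\<close>
definition tension :: "('a::euclidean_space \<Rightarrow> complex) \<Rightarrow> 'a \<Rightarrow> complex" where
  "tension f x = (\<Sum>b\<in>Basis. dir_deriv (\<lambda>y. dir_deriv f y b) x b)"

text \<open>kappa(f,g) = g(grad f, grad g), Euclidean metric extended complex-bilinearly.\<close>
definition kappa :: "('a::euclidean_space \<Rightarrow> complex) \<Rightarrow> ('a \<Rightarrow> complex) \<Rightarrow> 'a \<Rightarrow> complex" where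
  "kappa f g x = (\<Sum>b\<in>Basis. dir_deriv f x b * dir_deriv g x b)"

definition C2_on :: "'a::euclidean_space set \<Rightarrow> ('a \<Rightarrow> complex) \<Rightarrow> bool" where
  "C2_on U f \<longleftrightarrow> (\<forall>x\<in>U. f differentiable (at x)) \<and>
     (\<forall>b\<in>Basis. \<forall>x\<in>U. (\<lambda>y. dir_deriv f y b) differentiable (at x))"

definition orthogonal_harmonic_family ::
  "'a::euclidean_space set \<Rightarrow> ('a \<Rightarrow> complex) set \<Rightarrow> bool" where
  "orthogonal_harmonic_family U \<Omega> \<longleftrightarrow>
     (\<forall>\<phi>\<in>\<Omega>. \<forall>x\<in>U. tension \<phi> x = 0) \<and>
     (\<forall>\<phi>\<in>\<Omega>. \<forall>\<psi>\<in>\<Omega>. \<forall>x\<in>U. kappa \<phi> \<psi> x = 0)"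

text \<open>Rows of X are indexed by 'p + 'p + 'r + 'r: blocks X0, X1, X2, X3 (s = p + 2r).\<close>
type_synonym ('p, 'r) rowidx = "'p + ('p + ('r + 'r))"

definition U_star :: "(real^'p^('p::finite, 'r::finite) rowidx) set" where
  "U_star = {X. invertible (transpose X ** X)}"

definition Zmat :: "real^'p^('p::finite, 'r::finite) rowidx \<Rightarrow> complex^'p^'p" where
  "Zmat X = (\<chi> j k. complex_of_real (X $ Inl j $ k) + \<i> * complex_of_real (X $ Inr (Inl j) $ k))"

definition Wmat :: "real^'p^('p::finite, 'r::finite) rowidx \<Rightarrow> complex^'p^'r" where
  "Wmat X = (\<chi> a k. complex_of_real (X $ Inr (Inr (Inl a)) $ k)
                    + \<i> * complex_of_real (X $ Inr (Inr (Inr a)) $ k))"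

definition V_star :: "(real^'p^('p::finite, 'r::finite) rowidx) set" where
  "V_star = {X \<in> U_star. det (Zmat X) \<noteq> 0}"

definition Phi_star :: "real^'p^('p::finite, 'r::finite) rowidx \<Rightarrow> complex^'p^'r" where
  "Phi_star X = Wmat X ** matrix_inv (Zmat X)"

end

theory Submission
  imports Defs
begin

(*
  Let the complex coordinates zeta_c be the entries of the stacked complex matrix (Z; W).
  By Cramer's rule every entry of W Z^-1 is, on the open set where det Z is nonzero, a rational
  function of the zeta_c. Differentiating a rational function of the zeta_c gives a combination
  of the differentials d zeta_c with rational coefficients (the function is holomorphic in zeta),
  so its first derivatives are sums of zeta_c(v) f'_c and its second derivatives sums of
  zeta_c(v) zeta_d(w) f''_cd. Each zeta_c is <., e> + i <., e'> for two standard basis vectors e, e',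
  and all these basis vectors are distinct; hence the complex-bilinear extension of the metric
  vanishes on them, sum_b zeta_c(b) zeta_d(b) = 0, and this kills both tau and kappa.
  Invariance: X A has blocks Z A and W A, and (W A) (Z A)^-1 = W Z^-1.
*)

inductive_set rational_functions :: "('c \<Rightarrow> 'a \<Rightarrow> complex) \<Rightarrow> 'a set \<Rightarrow> ('a \<Rightarrow> complex) set"
  for \<zeta> :: "'c \<Rightarrow> 'a \<Rightarrow> complex" and S :: "'a set"
where
  const: "(\<lambda>x. k) \<in> rational_functions \<zeta> S"
| coord: "\<zeta> c \<in> rational_functions \<zeta> S"
| add: "f \<in> rational_functions \<zeta> S \<Longrightarrow> g \<in> rational_functions \<zeta> S
    \<Longrightarrow> (\<lambda>x. f x + g x) \<in> rational_functions \<zeta> S"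
| mult: "f \<in> rational_functions \<zeta> S \<Longrightarrow> g \<in> rational_functions \<zeta> S
    \<Longrightarrow> (\<lambda>x. f x * g x) \<in> rational_functions \<zeta> S"
| inverse: "f \<in> rational_functions \<zeta> S \<Longrightarrow> \<forall>x\<in>S. f x \<noteq> 0
    \<Longrightarrow> (\<lambda>x. inverse (f x)) \<in> rational_functions \<zeta> S"
\<comment> \<open>Only the values on S matter: this admits functions with junk values off S, such as
    entries of \<open>matrix_inv\<close>.\<close>
| agree: "f \<in> rational_functions \<zeta> S \<Longrightarrow> \<forall>x\<in>S. g x = f x \<Longrightarrow> g \<in> rational_functions \<zeta> S"

lemma rational_functions_sum:
  assumes "finite A" "\<And>a. a \<in> A \<Longrightarrow> F a \<in> rational_functions \<zeta> S"
  shows "(\<lambda>x. \<Sum>a\<in>A. F a x) \<in> rational_functions \<zeta> S"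
  using assms by induction (auto intro: rational_functions.intros)

lemma rational_functions_prod:
  assumes "finite A" "\<And>a. a \<in> A \<Longrightarrow> F a \<in> rational_functions \<zeta> S"
  shows "(\<lambda>x. \<Prod>a\<in>A. F a x) \<in> rational_functions \<zeta> S"
  using assms by induction (auto intro: rational_functions.intros)

lemma rational_functions_det:
  fixes M :: "'a \<Rightarrow> complex^'n::finite^'n"
  assumes "\<And>i j. (\<lambda>x. M x $ i $ j) \<in> rational_functions \<zeta> S"
  shows "(\<lambda>x. det (M x)) \<in> rational_functions \<zeta> S"
  unfolding det_def
  by (intro rational_functions_sum rational_functions_prod rational_functions.mult
      rational_functions.const assms finite_permutations finite)

definition coord_holomorphic_on ::
    "('c::finite \<Rightarrow> 'a::real_normed_vector \<Rightarrow> complex) \<Rightarrow> 'a set \<Rightarrow> ('a \<Rightarrow> complex) \<Rightarrow> bool"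
where
  "coord_holomorphic_on \<zeta> S f \<longleftrightarrow> (\<exists>f'. (\<forall>c. f' c \<in> rational_functions \<zeta> S) \<and>
     (\<forall>x\<in>S. (f has_derivative (\<lambda>v. \<Sum>c\<in>UNIV. \<zeta> c v * f' c x)) (at x)))"

lemma coord_holomorphic_on_const: "coord_holomorphic_on \<zeta> S (\<lambda>x. k)"
  unfolding coord_holomorphic_on_def
  by (rule exI[of _ "\<lambda>c x. 0"]) (auto intro: rational_functions.const)

lemma coord_holomorphic_on_coord:
  assumes "bounded_linear (\<zeta> d)"
  shows "coord_holomorphic_on \<zeta> S (\<zeta> d)"
proof -
  have "(\<zeta> d has_derivative (\<lambda>v. \<Sum>c\<in>UNIV. \<zeta> c v * (if c = d then 1 else 0))) (at x)" for x
    using bounded_linear_imp_has_derivative[OF assms] by (simp add: if_distrib cong: if_cong)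
  then show ?thesis
    unfolding coord_holomorphic_on_def
    by (intro exI[of _ "\<lambda>c x. if c = d then 1 else 0"]) (auto intro: rational_functions.const)
qed

lemma coord_holomorphic_on_add:
  assumes "coord_holomorphic_on \<zeta> S f" "coord_holomorphic_on \<zeta> S g"
  shows "coord_holomorphic_on \<zeta> S (\<lambda>x. f x + g x)"
proof -
  obtain f' g' where
    f': "\<forall>c. f' c \<in> rational_functions \<zeta> S"
      "\<forall>x\<in>S. (f has_derivative (\<lambda>v. \<Sum>c\<in>UNIV. \<zeta> c v * f' c x)) (at x)" and
    g': "\<forall>c. g' c \<in> rational_functions \<zeta> S"
      "\<forall>x\<in>S. (g has_derivative (\<lambda>v. \<Sum>c\<in>UNIV. \<zeta> c v * g' c x)) (at x)"
    using assms unfolding coord_holomorphic_on_def by blast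
  show ?thesis
    unfolding coord_holomorphic_on_def
  proof (intro exI[of _ "\<lambda>c x. f' c x + g' c x"] conjI ballI allI)
    show "(\<lambda>x. f' c x + g' c x) \<in> rational_functions \<zeta> S" for c
      using f' g' by (auto intro: rational_functions.add)
    fix x assume "x \<in> S"
    with f' g' have "((\<lambda>x. f x + g x) has_derivative
        (\<lambda>v. (\<Sum>c\<in>UNIV. \<zeta> c v * f' c x) + (\<Sum>c\<in>UNIV. \<zeta> c v * g' c x))) (at x)"
      by (auto intro: has_derivative_add)
    then show "((\<lambda>x. f x + g x) has_derivative (\<lambda>v. \<Sum>c\<in>UNIV. \<zeta> c v * (f' c x + g' c x))) (at x)"
      by (simp add: distrib_left sum.distrib)
  qed
qed

lemma coord_holomorphic_on_mult:
  assumes "coord_holomorphic_on \<zeta> S f" "coord_holomorphic_on \<zeta> S g"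
    and "f \<in> rational_functions \<zeta> S" "g \<in> rational_functions \<zeta> S"
  shows "coord_holomorphic_on \<zeta> S (\<lambda>x. f x * g x)"
proof -
  obtain f' g' where
    f': "\<forall>c. f' c \<in> rational_functions \<zeta> S"
      "\<forall>x\<in>S. (f has_derivative (\<lambda>v. \<Sum>c\<in>UNIV. \<zeta> c v * f' c x)) (at x)" and
    g': "\<forall>c. g' c \<in> rational_functions \<zeta> S"
      "\<forall>x\<in>S. (g has_derivative (\<lambda>v. \<Sum>c\<in>UNIV. \<zeta> c v * g' c x)) (at x)"
    using assms(1,2) unfolding coord_holomorphic_on_def by blast
  show ?thesis
    unfolding coord_holomorphic_on_def
  proof (intro exI[of _ "\<lambda>c x. f x * g' c x + f' c x * g x"] conjI ballI allI)
    show "(\<lambda>x. f x * g' c x + f' c x * g x) \<in> rational_functions \<zeta> S" for c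
      by (intro rational_functions.add rational_functions.mult) (use assms(3,4) f' g' in auto)
    fix x assume "x \<in> S"
    with f' g' have "((\<lambda>x. f x * g x) has_derivative
        (\<lambda>v. f x * (\<Sum>c\<in>UNIV. \<zeta> c v * g' c x) + (\<Sum>c\<in>UNIV. \<zeta> c v * f' c x) * g x)) (at x)"
      by (auto intro: has_derivative_mult)
    then show "((\<lambda>x. f x * g x) has_derivative
        (\<lambda>v. \<Sum>c\<in>UNIV. \<zeta> c v * (f x * g' c x + f' c x * g x))) (at x)"
      by (simp add: sum.distrib sum_distrib_left sum_distrib_right algebra_simps)
  qed
qed

lemma coord_holomorphic_on_inverse:
  assumes "coord_holomorphic_on \<zeta> S f" "f \<in> rational_functions \<zeta> S" "\<forall>x\<in>S. f x \<noteq> 0"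
  shows "coord_holomorphic_on \<zeta> S (\<lambda>x. inverse (f x))"
proof -
  obtain f' where
    f': "\<forall>c. f' c \<in> rational_functions \<zeta> S"
      "\<forall>x\<in>S. (f has_derivative (\<lambda>v. \<Sum>c\<in>UNIV. \<zeta> c v * f' c x)) (at x)"
    using assms(1) unfolding coord_holomorphic_on_def by blast
  have inv: "(\<lambda>x. inverse (f x)) \<in> rational_functions \<zeta> S"
    using assms(2,3) by (rule rational_functions.inverse)
  show ?thesis
    unfolding coord_holomorphic_on_def
  proof (intro exI[of _ "\<lambda>c x. - (f' c x * inverse (f x) * inverse (f x))"] conjI ballI allI)
    show "(\<lambda>x. - (f' c x * inverse (f x) * inverse (f x))) \<in> rational_functions \<zeta> S" for c
      using rational_functions.mult[OF rational_functions.const[of "- 1"]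
          rational_functions.mult[OF rational_functions.mult[OF f'(1)[rule_format] inv] inv]]
      by simp
    fix x assume "x \<in> S"
    with f' assms(3) have "((\<lambda>x. inverse (f x)) has_derivative
        (\<lambda>v. - (inverse (f x) * (\<Sum>c\<in>UNIV. \<zeta> c v * f' c x) * inverse (f x)))) (at x)"
      by (intro Deriv.has_derivative_inverse) auto
    then show "((\<lambda>x. inverse (f x)) has_derivative
        (\<lambda>v. \<Sum>c\<in>UNIV. \<zeta> c v * - (f' c x * inverse (f x) * inverse (f x)))) (at x)"
      by (simp add: sum_distrib_left sum_distrib_right sum_negf algebra_simps)
  qed
qed

lemma coord_holomorphic_on_agree:
  assumes "coord_holomorphic_on \<zeta> S f" "open S" "\<forall>x\<in>S. g x = f x"
  shows "coord_holomorphic_on \<zeta> S g"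
proof -
  obtain f' where
    f': "\<forall>c. f' c \<in> rational_functions \<zeta> S"
      "\<forall>x\<in>S. (f has_derivative (\<lambda>v. \<Sum>c\<in>UNIV. \<zeta> c v * f' c x)) (at x)"
    using assms(1) unfolding coord_holomorphic_on_def by blast
  have "(g has_derivative (\<lambda>v. \<Sum>c\<in>UNIV. \<zeta> c v * f' c x)) (at x)" if "x \<in> S" for x
  proof (rule has_derivative_transform_within_open[OF _ \<open>open S\<close> that])
    show "(f has_derivative (\<lambda>v. \<Sum>c\<in>UNIV. \<zeta> c v * f' c x)) (at x)"
      using f'(2) that by blast
  qed (use assms(3) in simp)
  with f' show ?thesis
    unfolding coord_holomorphic_on_def by blast
qed

lemma rational_functions_coord_holomorphic_on:
  assumes "\<And>c. bounded_linear (\<zeta> c)" "open S" "f \<in> rational_functions \<zeta> S"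
  shows "coord_holomorphic_on \<zeta> S f"
  using assms(3)
proof induction
  case (coord c)
  show ?case
    using assms(1) by (rule coord_holomorphic_on_coord)
next
  case (agree f g)
  then show ?case
    using assms(2) coord_holomorphic_on_agree by blast
qed (simp_all add: coord_holomorphic_on_const coord_holomorphic_on_add coord_holomorphic_on_mult
    coord_holomorphic_on_inverse)

lemma dir_deriv_eq_derivative:
  assumes "(f has_derivative D) (at x)"
  shows "dir_deriv f x v = D v"
proof -
  have "((\<lambda>t::real. x + t *\<^sub>R v) has_derivative (\<lambda>t. t *\<^sub>R v)) (at 0)"
    by (auto intro!: derivative_eq_intros)
  from has_derivative_compose[OF this] assms
  have "((\<lambda>t. f (x + t *\<^sub>R v)) has_derivative (\<lambda>t. D (t *\<^sub>R v))) (at 0)"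
    by simp
  then have "((\<lambda>t. f (x + t *\<^sub>R v)) has_vector_derivative D v) (at 0)"
    using linear_cmul[OF has_derivative_linear[OF assms]] by (simp add: has_vector_derivative_def)
  then show ?thesis
    unfolding dir_deriv_def by (rule vector_derivative_at)
qed

lemma rational_functions_dir_deriv_has_derivative:
  fixes \<zeta> :: "'c::finite \<Rightarrow> 'a::euclidean_space \<Rightarrow> complex"
  assumes lin: "\<And>c. bounded_linear (\<zeta> c)" and S: "open S"
    and f: "f \<in> rational_functions \<zeta> S"
  shows "\<exists>f''. \<forall>y\<in>S. \<forall>v. ((\<lambda>z. dir_deriv f z v) has_derivative
    (\<lambda>w. \<Sum>c\<in>UNIV. \<Sum>d\<in>UNIV. \<zeta> c v * \<zeta> d w * f'' c d y)) (at y)"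
proof -
  obtain f' where f'R: "\<forall>c. f' c \<in> rational_functions \<zeta> S"
    and df: "\<forall>y\<in>S. (f has_derivative (\<lambda>v. \<Sum>c\<in>UNIV. \<zeta> c v * f' c y)) (at y)"
    using rational_functions_coord_holomorphic_on[OF lin S f]
    unfolding coord_holomorphic_on_def by blast
  have "\<exists>g. \<forall>y\<in>S. (f' c has_derivative (\<lambda>w. \<Sum>d\<in>UNIV. \<zeta> d w * g d y)) (at y)" for c
    using rational_functions_coord_holomorphic_on[OF lin S f'R[rule_format]]
    unfolding coord_holomorphic_on_def by blast
  then obtain f'' where
    df': "\<forall>c. \<forall>y\<in>S. (f' c has_derivative (\<lambda>w. \<Sum>d\<in>UNIV. \<zeta> d w * f'' c d y)) (at y)"
    using choice[of "\<lambda>c g. \<forall>y\<in>S. (f' c has_derivative (\<lambda>w. \<Sum>d\<in>UNIV. \<zeta> d w * g d y)) (at y)"]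
    by blast
  have "((\<lambda>z. dir_deriv f z v) has_derivative
      (\<lambda>w. \<Sum>c\<in>UNIV. \<Sum>d\<in>UNIV. \<zeta> c v * \<zeta> d w * f'' c d y)) (at y)" if y: "y \<in> S" for y v
  proof (rule has_derivative_transform_within_open[OF _ S y])
    have "((\<lambda>z. \<Sum>c\<in>UNIV. \<zeta> c v * f' c z) has_derivative
        (\<lambda>w. \<Sum>c\<in>UNIV. \<zeta> c v * (\<Sum>d\<in>UNIV. \<zeta> d w * f'' c d y))) (at y)"
      using df' y by (auto intro!: has_derivative_sum has_derivative_mult_right)
    then show "((\<lambda>z. \<Sum>c\<in>UNIV. \<zeta> c v * f' c z) has_derivative
        (\<lambda>w. \<Sum>c\<in>UNIV. \<Sum>d\<in>UNIV. \<zeta> c v * \<zeta> d w * f'' c d y)) (at y)"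
      by (simp add: sum_distrib_left mult.assoc)
    show "(\<Sum>c\<in>UNIV. \<zeta> c v * f' c z) = dir_deriv f z v" if "z \<in> S" for z
      using dir_deriv_eq_derivative df that by (metis (no_types))
  qed
  then show ?thesis
    by blast
qed

definition isotropic :: "('c \<Rightarrow> 'a::euclidean_space \<Rightarrow> complex) \<Rightarrow> bool" where
  "isotropic \<zeta> \<longleftrightarrow> (\<forall>c d. (\<Sum>b\<in>Basis. \<zeta> c b * \<zeta> d b) = 0)"

lemma isotropic_sum_eq_0:
  fixes \<zeta> :: "'c::finite \<Rightarrow> 'a::euclidean_space \<Rightarrow> complex"
  assumes "isotropic \<zeta>"
  shows "(\<Sum>b\<in>Basis. \<Sum>c\<in>UNIV. \<Sum>d\<in>UNIV. \<zeta> c b * \<zeta> d b * F c d) = 0"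
proof -
  have "(\<Sum>b\<in>Basis. \<Sum>c\<in>UNIV. \<Sum>d\<in>UNIV. \<zeta> c b * \<zeta> d b * F c d)
      = (\<Sum>c\<in>UNIV. \<Sum>d\<in>UNIV. (\<Sum>b\<in>Basis. \<zeta> c b * \<zeta> d b) * F c d)"
    by (simp add: sum_distrib_right sum.swap[of _ Basis])
  also have "\<dots> = 0"
    using assms by (simp add: isotropic_def)
  finally show ?thesis .
qed

lemma rational_functions_C2_on:
  fixes \<zeta> :: "'c::finite \<Rightarrow> 'a::euclidean_space \<Rightarrow> complex"
  assumes lin: "\<And>c. bounded_linear (\<zeta> c)" and S: "open S"
    and f: "f \<in> rational_functions \<zeta> S"
  shows "C2_on S f"
proof -
  have "\<forall>y\<in>S. f differentiable (at y)"
    using rational_functions_coord_holomorphic_on[OF lin S f]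
    unfolding coord_holomorphic_on_def by (auto intro: differentiableI)
  moreover have "\<forall>y\<in>S. \<forall>v. (\<lambda>z. dir_deriv f z v) differentiable (at y)"
    using rational_functions_dir_deriv_has_derivative[OF lin S f] by (auto intro: differentiableI)
  ultimately show ?thesis
    unfolding C2_on_def by blast
qed

lemma tension_rational_functions:
  fixes \<zeta> :: "'c::finite \<Rightarrow> 'a::euclidean_space \<Rightarrow> complex"
  assumes lin: "\<And>c. bounded_linear (\<zeta> c)" and S: "open S"
    and f: "f \<in> rational_functions \<zeta> S" and "isotropic \<zeta>" and x: "x \<in> S"
  shows "tension f x = 0"
proof -
  obtain f'' where d2f: "\<And>v. ((\<lambda>z. dir_deriv f z v) has_derivative
      (\<lambda>w. \<Sum>c\<in>UNIV. \<Sum>d\<in>UNIV. \<zeta> c v * \<zeta> d w * f'' c d x)) (at x)"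
    using rational_functions_dir_deriv_has_derivative[OF lin S f] x by blast
  have "tension f x = (\<Sum>b\<in>Basis. \<Sum>c\<in>UNIV. \<Sum>d\<in>UNIV. \<zeta> c b * \<zeta> d b * f'' c d x)"
    unfolding tension_def dir_deriv_eq_derivative[OF d2f] ..
  also have "\<dots> = 0"
    using \<open>isotropic \<zeta>\<close> by (rule isotropic_sum_eq_0)
  finally show ?thesis .
qed

lemma kappa_rational_functions:
  fixes \<zeta> :: "'c::finite \<Rightarrow> 'a::euclidean_space \<Rightarrow> complex"
  assumes lin: "\<And>c. bounded_linear (\<zeta> c)" and S: "open S"
    and f: "f \<in> rational_functions \<zeta> S" and g: "g \<in> rational_functions \<zeta> S"
    and "isotropic \<zeta>" and x: "x \<in> S"
  shows "kappa f g x = 0"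
proof -
  obtain f' where df: "(f has_derivative (\<lambda>v. \<Sum>c\<in>UNIV. \<zeta> c v * f' c x)) (at x)"
    using rational_functions_coord_holomorphic_on[OF lin S f] x
    unfolding coord_holomorphic_on_def by blast
  obtain g' where dg: "(g has_derivative (\<lambda>v. \<Sum>d\<in>UNIV. \<zeta> d v * g' d x)) (at x)"
    using rational_functions_coord_holomorphic_on[OF lin S g] x
    unfolding coord_holomorphic_on_def by blast
  have "kappa f g x = (\<Sum>b\<in>Basis. (\<Sum>c\<in>UNIV. \<zeta> c b * f' c x) * (\<Sum>d\<in>UNIV. \<zeta> d b * g' d x))"
    unfolding kappa_def dir_deriv_eq_derivative[OF df] dir_deriv_eq_derivative[OF dg] ..
  also have "\<dots> = (\<Sum>b\<in>Basis. \<Sum>c\<in>UNIV. \<Sum>d\<in>UNIV. \<zeta> c b * \<zeta> d b * (f' c x * g' d x))"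
    by (simp add: sum_product mult_ac)
  also have "\<dots> = 0"
    using \<open>isotropic \<zeta>\<close> by (rule isotropic_sum_eq_0)
  finally show ?thesis .
qed

lemma rational_functions_continuous_on:
  fixes \<zeta> :: "'c::finite \<Rightarrow> 'a::real_normed_vector \<Rightarrow> complex"
  assumes lin: "\<And>c. bounded_linear (\<zeta> c)" and S: "open S"
    and f: "f \<in> rational_functions \<zeta> S"
  shows "continuous_on S f"
proof -
  obtain f' where "\<forall>x\<in>S. (f has_derivative (\<lambda>v. \<Sum>c\<in>UNIV. \<zeta> c v * f' c x)) (at x)"
    using rational_functions_coord_holomorphic_on[OF lin S f]
    unfolding coord_holomorphic_on_def by blast
  then show ?thesis
    by (intro differentiable_imp_continuous_on differentiable_at_imp_differentiable_on)
      (auto intro: differentiableI)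
qed

lemma sum_Basis_complexified_inner:
  fixes u v u' v' :: "'a::euclidean_space"
  shows "(\<Sum>b\<in>Basis. (of_real (b \<bullet> u) + \<i> * of_real (b \<bullet> v))
      * (of_real (b \<bullet> u') + \<i> * of_real (b \<bullet> v')))
    = of_real (u \<bullet> u' - v \<bullet> v') + \<i> * of_real (u \<bullet> v' + v \<bullet> u')"
proof -
  have inner: "(\<Sum>b\<in>Basis. complex_of_real (b \<bullet> x) * of_real (b \<bullet> y)) = of_real (x \<bullet> y)" for x y :: 'a
    by (simp add: euclidean_inner[of x y] inner_commute flip: of_real_mult)
  show ?thesis
    by (simp add: algebra_simps sum.distrib sum_subtractf inner inner_commute flip: sum_distrib_left)
qed

definition re_row :: "'p + 'r \<Rightarrow> ('p, 'r) rowidx" where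
  "re_row = case_sum Inl (\<lambda>a. Inr (Inr (Inl a)))"

definition im_row :: "'p + 'r \<Rightarrow> ('p, 'r) rowidx" where
  "im_row = case_sum (\<lambda>j. Inr (Inl j)) (\<lambda>a. Inr (Inr (Inr a)))"

lemma re_row_eq_iff [simp]: "re_row i = re_row i' \<longleftrightarrow> i = i'"
  and im_row_eq_iff [simp]: "im_row i = im_row i' \<longleftrightarrow> i = i'"
  and re_row_neq_im_row [simp]: "re_row i \<noteq> im_row i'"
  and im_row_neq_re_row [simp]: "im_row i \<noteq> re_row i'"
  by (auto simp: re_row_def im_row_def split: sum.splits)

definition complex_coord :: "('p + 'r) \<times> 'p \<Rightarrow> real^'p^('p::finite, 'r::finite) rowidx \<Rightarrow> complex" where
  "complex_coord = (\<lambda>(i, k) X. of_real (X $ re_row i $ k) + \<i> * of_real (X $ im_row i $ k))"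

lemma Zmat_eq_complex_coord: "Zmat X $ j $ k = complex_coord (Inl j, k) X"
  by (simp add: Zmat_def complex_coord_def re_row_def im_row_def)

lemma Wmat_eq_complex_coord: "Wmat X $ a $ k = complex_coord (Inr a, k) X"
  by (simp add: Wmat_def complex_coord_def re_row_def im_row_def)

lemma complex_coord_eq_inner:
  "complex_coord (i, k) X = of_real (X \<bullet> axis (re_row i) (axis k 1))
    + \<i> * of_real (X \<bullet> axis (im_row i) (axis k 1))"
  by (simp add: complex_coord_def inner_axis flip: cart_eq_inner_axis)

lemma bounded_linear_complex_coord: "bounded_linear (complex_coord c)"
  unfolding linear_conv_bounded_linear[symmetric]
  by (rule linearI)
    (simp_all add: complex_coord_def algebra_simps split: prod.splits, simp add: scaleR_conv_of_real)

lemma isotropic_complex_coord: "isotropic complex_coord"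
  unfolding isotropic_def
proof (clarify)
  fix i k i' k'
  show "(\<Sum>b\<in>Basis. complex_coord (i, k) b * complex_coord (i', k') b) = 0"
    unfolding complex_coord_eq_inner sum_Basis_complexified_inner
    by (simp add: inner_axis_axis)
qed

lemma det_Zmat_rational: "(\<lambda>X. det (Zmat X)) \<in> rational_functions complex_coord S"
  by (rule rational_functions_det) (simp add: Zmat_eq_complex_coord rational_functions.coord)

lemma open_det_Zmat_neq_0: "open {X :: real^'p^('p::finite, 'r::finite) rowidx. det (Zmat X) \<noteq> 0}"
proof -
  have "continuous_on UNIV (\<lambda>X :: real^'p^('p, 'r) rowidx. det (Zmat X))"
    using bounded_linear_complex_coord open_UNIV det_Zmat_rational
    by (rule rational_functions_continuous_on)
  then show ?thesis
    by (rule open_Collect_neq) (rule continuous_on_const)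
qed

lemma matrix_mul_matrix_inv:
  assumes "invertible A"
  shows "A ** matrix_inv A = mat 1" and "matrix_inv A ** A = mat 1"
  using someI_ex[OF assms[unfolded invertible_def]] by (simp_all add: matrix_inv_def)

lemma matrix_inv_cramer:
  fixes Z :: "'a::field^'n::finite^'n"
  assumes "det Z \<noteq> 0"
  shows "matrix_inv Z $ j $ k = det (\<chi> i l. if l = j then (if i = k then 1 else 0) else Z $ i $ l) / det Z"
proof -
  have "Z *v (matrix_inv Z *v axis k 1) = axis k 1"
    using matrix_mul_matrix_inv(1) assms invertible_det_nz
    by (metis matrix_vector_mul_assoc matrix_vector_mul_lid)
  then have "(matrix_inv Z *v axis k 1) $ j = det (\<chi> i l. if l = j then axis k 1 $ i else Z $ i $ l) / det Z"
    by (simp add: cramer[OF assms])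
  moreover have "(matrix_inv Z *v axis k 1) $ j = matrix_inv Z $ j $ k"
    by (simp add: matrix_vector_mult_def axis_def if_distrib cong: if_cong)
  moreover have "(\<chi> i l. if l = j then axis k 1 $ i else Z $ i $ l)
      = (\<chi> i l. if l = j then (if i = k then 1 else 0) else Z $ i $ l)"
    by (simp add: vec_eq_iff axis_def)
  ultimately show ?thesis
    by simp
qed

lemma Phi_star_rational:
  "(\<lambda>X :: real^'p^('p::finite, 'r::finite) rowidx. Phi_star X $ a $ k)
    \<in> rational_functions complex_coord {X. det (Zmat X) \<noteq> 0}"
  (is "_ \<in> rational_functions _ ?S")
proof -
  let ?R = "rational_functions complex_coord ?S"
  define cof where "cof j (X :: real^'p^('p, 'r) rowidx)
    = det (\<chi> i l. if l = j then (if i = k then 1 else 0) else Zmat X $ i $ l)" for j X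
  have entry: "(\<lambda>X. if l = j then c else Zmat X $ i $ l) \<in> ?R" for i l j c
    by (cases "l = j") (simp_all add: Zmat_eq_complex_coord rational_functions.coord rational_functions.const)
  have "cof j \<in> ?R" for j
    unfolding cof_def by (rule rational_functions_det) (simp only: vec_lambda_beta entry)
  moreover have "(\<lambda>X. inverse (det (Zmat X))) \<in> ?R"
    using det_Zmat_rational by (rule rational_functions.inverse) simp
  ultimately have "(\<lambda>X. \<Sum>j\<in>UNIV. Wmat X $ a $ j * (cof j X * inverse (det (Zmat X)))) \<in> ?R"
    by (intro rational_functions_sum rational_functions.mult)
      (simp_all add: Wmat_eq_complex_coord rational_functions.coord)
  moreover have "\<forall>X\<in>?S. Phi_star X $ a $ k
      = (\<Sum>j\<in>UNIV. Wmat X $ a $ j * (cof j X * inverse (det (Zmat X))))"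
    by (simp add: Phi_star_def matrix_matrix_mult_def matrix_inv_cramer cof_def divide_inverse)
  ultimately show ?thesis
    by (rule rational_functions.agree)
qed

definition of_real_matrix :: "real^'n^'m \<Rightarrow> complex^'n^'m" where
  "of_real_matrix A = (\<chi> i j. of_real (A $ i $ j))"

lemma det_of_real_matrix: "det (of_real_matrix A) = of_real (det A)"
  by (simp add: of_real_matrix_def det_def of_real_sum of_real_mult of_real_prod)

lemma Zmat_mult: "Zmat (X ** A) = Zmat X ** of_real_matrix A"
  by (simp add: vec_eq_iff Zmat_def of_real_matrix_def matrix_matrix_mult_def of_real_sum
      sum.distrib sum_distrib_left algebra_simps)

lemma Wmat_mult: "Wmat (X ** A) = Wmat X ** of_real_matrix A"
  by (simp add: vec_eq_iff Wmat_def of_real_matrix_def matrix_matrix_mult_def of_real_sum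
      sum.distrib sum_distrib_left algebra_simps)

lemma V_star_mult_invertible:
  assumes "invertible A" "X \<in> V_star"
  shows "X ** A \<in> V_star"
proof -
  have "transpose (X ** A) ** (X ** A) = transpose A ** (transpose X ** X) ** A"
    by (simp add: matrix_transpose_mul matrix_mul_assoc)
  then have "invertible (transpose (X ** A) ** (X ** A))"
    using assms by (simp add: V_star_def U_star_def invertible_mult transpose_invertible)
  moreover have "det (Zmat (X ** A)) \<noteq> 0"
    using assms by (simp add: V_star_def Zmat_mult det_mul det_of_real_matrix invertible_det_nz)
  ultimately show ?thesis
    by (simp add: V_star_def U_star_def)
qed

lemma Phi_star_mult_invertible:
  assumes A: "invertible A" and Z: "det (Zmat X) \<noteq> 0"
  shows "Phi_star (X ** A) = Phi_star X"
proof -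
  define M where "M = matrix_inv (Zmat X)"
  define N where "N = matrix_inv (Zmat X ** of_real_matrix A)"
  have "invertible (Zmat X ** of_real_matrix A)"
    using A Z by (simp add: invertible_det_nz det_mul det_of_real_matrix)
  then have "of_real_matrix A ** N = M ** (Zmat X ** of_real_matrix A ** N)"
    using Z by (simp add: M_def matrix_mul_matrix_inv(2) invertible_det_nz matrix_mul_assoc)
  also have "\<dots> = M"
    using \<open>invertible (Zmat X ** of_real_matrix A)\<close> by (simp add: N_def matrix_mul_matrix_inv(1))
  finally have "of_real_matrix A ** N = M" .
  then show ?thesis
    by (simp add: Phi_star_def Zmat_mult Wmat_mult flip: M_def N_def matrix_mul_assoc)
qed

theorem proposition9p2:
  defines "\<Omega> \<equiv> {(\<lambda>X::real^'p^('p::finite, 'r::finite) rowidx. Phi_star X $ a $ k) | a k. True}"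
  shows "orthogonal_harmonic_family (V_star :: (real^'p^('p, 'r) rowidx) set) \<Omega>
       \<and> (\<forall>\<phi>\<in>\<Omega>. C2_on V_star \<phi>)
       \<and> (\<forall>A::real^'p^'p. invertible A \<longrightarrow>
            (\<forall>X\<in>V_star. X ** A \<in> V_star \<and> (\<forall>\<phi>\<in>\<Omega>. \<phi> (X ** A) = \<phi> X)))"
proof -
  let ?S = "{X :: real^'p^('p, 'r) rowidx. det (Zmat X) \<noteq> 0}"
  have V_star_subset: "V_star \<subseteq> ?S"
    by (auto simp: V_star_def)
  have rational: "\<phi> \<in> rational_functions complex_coord ?S" if "\<phi> \<in> \<Omega>" for \<phi>
    using that Phi_star_rational unfolding \<Omega>_def by blast
  note coords = bounded_linear_complex_coord open_det_Zmat_neq_0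
  have "orthogonal_harmonic_family V_star \<Omega>"
    unfolding orthogonal_harmonic_family_def
    using tension_rational_functions[OF coords rational isotropic_complex_coord]
      kappa_rational_functions[OF coords rational rational isotropic_complex_coord]
      V_star_subset by blast
  moreover have "C2_on V_star \<phi>" if "\<phi> \<in> \<Omega>" for \<phi>
    using rational_functions_C2_on[OF coords rational[OF that]] V_star_subset
    unfolding C2_on_def by blast
  moreover have "\<phi> (X ** A) = \<phi> X" if "\<phi> \<in> \<Omega>" "invertible A" "X \<in> V_star" for \<phi> A X
    using that V_star_subset unfolding \<Omega>_def by (auto simp: Phi_star_mult_invertible subset_iff)
  ultimately show ?thesis
    using V_star_mult_invertible by blast
qed

end
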